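(* Let $(X,\le,\to,\rightsquigarrow,d,u)$ be a weakly involutive unital quantum B-algebra and let $(\exists,\forall)$ be a pair of strong synchronized maps on $X$ such that $\exists$ is a weak existential quantifier (equivalently, $\forall$ is a weak universal quantifier). Then for all $x,y\in X$, and with each identity holding also when $\to$ is replaced by $\rightsquigarrow$ throughout: (1) $\exists(\forall x\to y)=\forall x\to\exists y$; (2) $\exists(x\to\forall y)=\forall x\to\forall y$; (3) $\exists(\exists x\to y)=\exists x\to\exists y$; (4) $\forall(\exists x\to y)=\exists x\to\forall y$; (5) $\forall(x\to\exists y)=\exists x\to\exists y$; (6) $\forall(\forall x\to y)=\forall x\to\forall y$; (7) $\forall(x\to\forall y)=\exists x\to\forall y$.
   Context: A quantum B-algebra is a partially ordered set $(X,\le)$ with two binary operations $\to$ and $\rightsquigarrow$ such that for all $x,y,z\in X$: $y\to z\le (x\to y)\to(x\to z)$; $y\rightsquigarrow z\le (x\rightsquigarrow y)\to(x\rightsquigarrow z)$; $y\le z$ implies $x\to y\le x\to z$; and $x\le y\to z$ iff $y\le x\rightsquigarrow z$. It is unital if there is $u\in X$ with $u\to x=u\rightsquigarrow x=x$ for all $x$. A pointed quantum B-algebra has a fixed $d\in X$; write $x^{-}=x\to d$, $x^{\sim}=x\rightsquigarrow d$; it is weakly involutive if $(x^{-})^{\sim}=(x^{\sim})^{-}=x$ for all $x$. In a weakly involutive quantum B-algebra define $x\odot y=(x\to y^{-})^{\sim}$ $(=(y\rightsquigarrow x^{\sim})^{-})$ and $x\oplus y=y^{\sim}\to x$ $(=x^{-}\rightsquigarrow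 y)$. A map $\tau:X\to X$ is good if $(\tau(x^{-}))^{\sim}=(\tau(x^{\sim}))^{-}$ for all $x$; good maps $\tau,\sigma$ are synchronized if $\sigma(x)=(\tau(x^{-}))^{\sim}=(\tau(x^{\sim}))^{-}$ for all $x$; they are strong synchronized if moreover $\tau\circ\sigma=\sigma$ (which for synchronized maps is equivalent to $\sigma\circ\tau=\tau$). A good map $\exists$ is a weak existential quantifier if for all $x,y$: $\exists d=d$; $\exists u=u$; $x\le\exists x$; $\exists(x\oplus\exists y)=\exists(\exists x\oplus y)=\exists x\oplus\exists y$; $\exists(x\oplus x)=\exists x\oplus\exists x$; $\exists(x\odot\exists y)=\exists(\exists x\odot y)=\exists x\odot\exists y$. A good map $\forall$ is a weak universal quantifier if for all $x,y$: $\forall u=u$; $\forall d=d$; $\forall x\le x$; $\forall(x\odot\forall y)=\forall(\forall x\odot y)=\forall x\odot\forall y$; $\forall(x\odot x)=\forall x\odot\forall x$; $\forall(x\oplus\forall y)=\forall(\forall x\oplus y)=\forall x\oplus\forall y$. *)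

theory Defs
  imports Main
begin

definition quantum_B_algebra :: "('a::order \<Rightarrow> 'a \<Rightarrow> 'a) \<Rightarrow> ('a \<Rightarrow> 'a \<Rightarrow> 'a) \<Rightarrow> bool" where
  "quantum_B_algebra imp rimp \<longleftrightarrow>
     (\<forall>x y z. imp y z \<le> imp (imp x y) (imp x z)) \<and>
     (\<forall>x y z. rimp y z \<le> imp (rimp x y) (rimp x z)) \<and>
     (\<forall>x y z. y \<le> z \<longrightarrow> imp x y \<le> imp x z) \<and>
     (\<forall>x y z. x \<le> imp y z \<longleftrightarrow> y \<le> rimp x z)"

definition unit_of :: "('a \<Rightarrow> 'a \<Rightarrow> 'a) \<Rightarrow> ('a \<Rightarrow> 'a \<Rightarrow> 'a) \<Rightarrow> 'a \<Rightarrow> bool" where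
  "unit_of imp rimp u \<longleftrightarrow> (\<forall>x. imp u x = x \<and> rimp u x = x)"

definition weakly_involutive :: "('a \<Rightarrow> 'a \<Rightarrow> 'a) \<Rightarrow> ('a \<Rightarrow> 'a \<Rightarrow> 'a) \<Rightarrow> 'a \<Rightarrow> bool" where
  "weakly_involutive imp rimp d \<longleftrightarrow> (\<forall>x. rimp (imp x d) d = x \<and> imp (rimp x d) d = x)"

definition qodot :: "('a \<Rightarrow> 'a \<Rightarrow> 'a) \<Rightarrow> ('a \<Rightarrow> 'a \<Rightarrow> 'a) \<Rightarrow> 'a \<Rightarrow> 'a \<Rightarrow> 'a \<Rightarrow> 'a" where
  "qodot imp rimp d x y = rimp (imp x (imp y d)) d"

definition qoplus :: "('a \<Rightarrow> 'a \<Rightarrow> 'a) \<Rightarrow> ('a \<Rightarrow> 'a \<Rightarrow> 'a) \<Rightarrow> 'a \<Rightarrow> 'a \<Rightarrow> 'a \<Rightarrow> 'a" where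
  "qoplus imp rimp d x y = imp (rimp y d) x"

definition good_map :: "('a \<Rightarrow> 'a \<Rightarrow> 'a) \<Rightarrow> ('a \<Rightarrow> 'a \<Rightarrow> 'a) \<Rightarrow> 'a \<Rightarrow> ('a \<Rightarrow> 'a) \<Rightarrow> bool" where
  "good_map imp rimp d \<tau> \<longleftrightarrow> (\<forall>x. rimp (\<tau> (imp x d)) d = imp (\<tau> (rimp x d)) d)"

definition synchronized :: "('a \<Rightarrow> 'a \<Rightarrow> 'a) \<Rightarrow> ('a \<Rightarrow> 'a \<Rightarrow> 'a) \<Rightarrow> 'a \<Rightarrow> ('a \<Rightarrow> 'a) \<Rightarrow> ('a \<Rightarrow> 'a) \<Rightarrow> bool" where
  "synchronized imp rimp d \<tau> \<sigma> \<longleftrightarrow> good_map imp rimp d \<tau> \<and> good_map imp rimp d \<sigma> \<and>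
     (\<forall>x. \<sigma> x = rimp (\<tau> (imp x d)) d \<and> \<sigma> x = imp (\<tau> (rimp x d)) d)"

definition strong_synchronized :: "('a \<Rightarrow> 'a \<Rightarrow> 'a) \<Rightarrow> ('a \<Rightarrow> 'a \<Rightarrow> 'a) \<Rightarrow> 'a \<Rightarrow> ('a \<Rightarrow> 'a) \<Rightarrow> ('a \<Rightarrow> 'a) \<Rightarrow> bool" where
  "strong_synchronized imp rimp d \<tau> \<sigma> \<longleftrightarrow> synchronized imp rimp d \<tau> \<sigma> \<and> \<tau> \<circ> \<sigma> = \<sigma>"

definition weak_exists_quantifier :: "('a::order \<Rightarrow> 'a \<Rightarrow> 'a) \<Rightarrow> ('a \<Rightarrow> 'a \<Rightarrow> 'a) \<Rightarrow> 'a \<Rightarrow> 'a \<Rightarrow> ('a \<Rightarrow> 'a) \<Rightarrow> bool" where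
  "weak_exists_quantifier imp rimp d u E \<longleftrightarrow> good_map imp rimp d E \<and> E d = d \<and> E u = u \<and>
     (\<forall>x. x \<le> E x) \<and>
     (\<forall>x y. E (qoplus imp rimp d x (E y)) = qoplus imp rimp d (E x) (E y) \<and>
            E (qoplus imp rimp d (E x) y) = qoplus imp rimp d (E x) (E y)) \<and>
     (\<forall>x. E (qoplus imp rimp d x x) = qoplus imp rimp d (E x) (E x)) \<and>
     (\<forall>x y. E (qodot imp rimp d x (E y)) = qodot imp rimp d (E x) (E y) \<and>
            E (qodot imp rimp d (E x) y) = qodot imp rimp d (E x) (E y))"

definition weak_forall_quantifier :: "('a::order \<Rightarrow> 'a \<Rightarrow> 'a) \<Rightarrow> ('a \<Rightarrow> 'a \<Rightarrow> 'a) \<Rightarrow> 'a \<Rightarrow> 'a \<Rightarrow> ('a \<Rightarrow> 'a) \<Rightarrow> bool" where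
  "weak_forall_quantifier imp rimp d u A \<longleftrightarrow> good_map imp rimp d A \<and> A u = u \<and> A d = d \<and>
     (\<forall>x. A x \<le> x) \<and>
     (\<forall>x y. A (qodot imp rimp d x (A y)) = qodot imp rimp d (A x) (A y) \<and>
            A (qodot imp rimp d (A x) y) = qodot imp rimp d (A x) (A y)) \<and>
     (\<forall>x. A (qodot imp rimp d x x) = qodot imp rimp d (A x) (A x)) \<and>
     (\<forall>x y. A (qoplus imp rimp d x (A y)) = qoplus imp rimp d (A x) (A y) \<and>
            A (qoplus imp rimp d (A x) y) = qoplus imp rimp d (A x) (A y))"

end

theory Submission
  imports Defs
begin

text \<open>
  Write \<open>x\<^sup>- = x \<rightarrow> d\<close> and \<open>x\<^sup>~ = x \<leadsto> d\<close>. In a weakly involutive quantum B-algebra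
  \<open>x \<rightarrow> y = y \<oplus> x\<^sup>- = (x \<odot> y\<^sup>~)\<^sup>-\<close>, and \<open>x \<leadsto> y = y\<^sup>~ \<rightarrow> x\<^sup>~\<close>.
  For a synchronized pair the negations exchange the two quantifiers, \<open>\<exists>(x\<^sup>-) = (\<forall>x)\<^sup>-\<close>,
  and strong synchronization makes \<open>\<exists>\<close> and \<open>\<forall>\<close> fix the same elements. So every
  identity reduces to an instance of the \<open>\<oplus>\<close>-laws (for \<open>\<exists>\<close>) or of the \<open>\<odot>\<close>-laws (for \<open>\<forall>\<close>)
  in which one argument is a common fixed point; the \<open>\<leadsto>\<close>-versions follow by contraposition.
\<close>

locale weakly_involutive_qba =
  fixes imp :: "'a::order \<Rightarrow> 'a \<Rightarrow> 'a" (infixr \<open>\<rightarrow>\<close> 60)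
    and rimp :: "'a \<Rightarrow> 'a \<Rightarrow> 'a" (infixr \<open>\<leadsto>\<close> 60)
    and d :: 'a
  assumes qba: "quantum_B_algebra imp rimp"
    and involutive: "weakly_involutive imp rimp d"
begin

abbreviation neg :: "'a \<Rightarrow> 'a" where "neg x \<equiv> x \<rightarrow> d"
abbreviation rneg :: "'a \<Rightarrow> 'a" where "rneg x \<equiv> x \<leadsto> d"

lemma imp_le_imp_imp: "y \<rightarrow> z \<le> (x \<rightarrow> y) \<rightarrow> (x \<rightarrow> z)"
  and rimp_le_imp_rimp: "y \<leadsto> z \<le> (x \<leadsto> y) \<rightarrow> (x \<leadsto> z)"
  and le_imp_iff_le_rimp: "x \<le> y \<rightarrow> z \<longleftrightarrow> y \<le> x \<leadsto> z"
  using qba unfolding quantum_B_algebra_def by blast+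

lemma rneg_neg [simp]: "rneg (neg x) = x"
  and neg_rneg [simp]: "neg (rneg x) = x"
  using involutive unfolding weakly_involutive_def by auto

lemma le_imp_rimp_self: "x \<le> (x \<leadsto> y) \<rightarrow> y"
  and le_rimp_imp_self: "x \<le> (x \<rightarrow> y) \<leadsto> y"
  by (rule le_imp_iff_le_rimp[THEN iffD2, OF order_refl],
      rule le_imp_iff_le_rimp[THEN iffD1, OF order_refl])

lemma imp_le_imp_contrapos: "x \<rightarrow> y \<le> neg y \<leadsto> neg x"
  by (rule le_imp_iff_le_rimp[THEN iffD1, OF imp_le_imp_imp])

lemma rimp_le_rimp_contrapos: "x \<leadsto> y \<le> rneg y \<leadsto> rneg x"
  by (rule le_imp_iff_le_rimp[THEN iffD1, OF rimp_le_imp_rimp])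

lemma imp_le_rimp: "x \<rightarrow> y \<le> x \<leadsto> y"
  using order_trans[OF imp_le_imp_contrapos rimp_le_rimp_contrapos] by simp

lemma imp_rimp_swap: "x \<rightarrow> (y \<leadsto> z) = y \<leadsto> (x \<rightarrow> z)"
proof (rule antisym)
  have "y \<le> (x \<rightarrow> (y \<leadsto> z)) \<rightarrow> (x \<rightarrow> z)"
    using le_imp_rimp_self imp_le_imp_imp by (rule order_trans)
  then show "x \<rightarrow> (y \<leadsto> z) \<le> y \<leadsto> (x \<rightarrow> z)"
    by (rule le_imp_iff_le_rimp[THEN iffD1])
  have "x \<le> (y \<leadsto> (x \<rightarrow> z)) \<rightarrow> (y \<leadsto> z)"
    using le_rimp_imp_self rimp_le_imp_rimp by (rule order_trans)
  also have "\<dots> \<le> (y \<leadsto> (x \<rightarrow> z)) \<leadsto> (y \<leadsto> z)"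
    by (rule imp_le_rimp)
  finally show "y \<leadsto> (x \<rightarrow> z) \<le> x \<rightarrow> (y \<leadsto> z)"
    by (rule le_imp_iff_le_rimp[THEN iffD2])
qed

lemma rimp_contrapos: "x \<leadsto> y = rneg y \<rightarrow> rneg x"
  using imp_rimp_swap[of "rneg y" "neg (rneg x)" d] by simp

lemma rneg_inject [simp]: "rneg x = rneg y \<longleftrightarrow> x = y"
  by (metis neg_rneg)

lemma qoplus_neg [simp]: "qoplus imp rimp d y (neg x) = x \<rightarrow> y"
  by (simp add: qoplus_def)

lemma qodot_rneg [simp]: "qodot imp rimp d x (rneg y) = rneg (x \<rightarrow> y)"
  by (simp add: qodot_def)

end

locale synchronized_quantifiers = weakly_involutive_qba +
  fixes E A :: "'a \<Rightarrow> 'a"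
  assumes strong_sync: "strong_synchronized imp rimp d E A"
    and E_qoplus: "\<And>x y. E (qoplus imp rimp d x (E y)) = qoplus imp rimp d (E x) (E y) \<and>
                         E (qoplus imp rimp d (E x) y) = qoplus imp rimp d (E x) (E y)"
    and E_qodot: "\<And>x y. E (qodot imp rimp d x (E y)) = qodot imp rimp d (E x) (E y) \<and>
                        E (qodot imp rimp d (E x) y) = qodot imp rimp d (E x) (E y)"
begin

lemma A_eq_rneg_E_neg: "A x = rneg (E (neg x))"
  and A_eq_neg_E_rneg: "A x = neg (E (rneg x))"
  using strong_sync unfolding strong_synchronized_def synchronized_def by blast+

lemma E_A [simp]: "E (A x) = A x"
  using strong_sync unfolding strong_synchronized_def by (metis comp_apply)

lemma E_neg: "E (neg x) = neg (A x)"
  by (simp add: A_eq_rneg_E_neg)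

lemma E_rneg: "E (rneg x) = rneg (A x)"
  by (simp add: A_eq_neg_E_rneg)

lemma A_rneg: "A (rneg x) = rneg (E x)"
  by (simp add: A_eq_rneg_E_neg)

lemma A_E [simp]: "A (E x) = E x"
proof -
  have "E x = neg (A (rneg x))"
    using E_neg[of "rneg x"] by simp
  then show ?thesis
    using A_eq_neg_E_rneg[of "E x"] E_A[of "rneg x"] by simp
qed

lemma E_idem [simp]: "E (E x) = E x"
  by (metis A_E E_A)

lemma A_fixed_if_E_fixed: "E a = a \<Longrightarrow> A a = a"
  by (metis A_E)

lemma E_fixed_neg: "E a = a \<Longrightarrow> E (neg a) = neg a"
  by (simp add: E_neg A_fixed_if_E_fixed)

lemma E_fixed_rneg: "E a = a \<Longrightarrow> E (rneg a) = rneg a"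
  by (simp add: E_rneg A_fixed_if_E_fixed)

lemma E_qoplus_fixed_left: "E a = a \<Longrightarrow> E (qoplus imp rimp d a y) = qoplus imp rimp d a (E y)"
  and E_qoplus_fixed_right: "E b = b \<Longrightarrow> E (qoplus imp rimp d x b) = qoplus imp rimp d (E x) b"
  and E_qodot_fixed_left: "E a = a \<Longrightarrow> E (qodot imp rimp d a y) = qodot imp rimp d a (E y)"
  and E_qodot_fixed_right: "E b = b \<Longrightarrow> E (qodot imp rimp d x b) = qodot imp rimp d (E x) b"
  by (metis E_qoplus, metis E_qoplus, metis E_qodot, metis E_qodot)

lemma E_imp_fixed_left: "E a = a \<Longrightarrow> E (a \<rightarrow> y) = a \<rightarrow> E y"
  using E_qoplus_fixed_right[OF E_fixed_neg, of a y] by simp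

lemma E_imp_fixed_right: "E b = b \<Longrightarrow> E (x \<rightarrow> b) = A x \<rightarrow> b"
  using E_qoplus_fixed_left[of b "neg x"] by (simp add: E_neg)

lemma A_imp_fixed_left: "E a = a \<Longrightarrow> A (a \<rightarrow> y) = a \<rightarrow> A y"
  using E_qodot_fixed_left[of a "rneg y"] by (simp add: E_rneg)

lemma A_imp_fixed_right: "E b = b \<Longrightarrow> A (x \<rightarrow> b) = E x \<rightarrow> b"
  using E_qodot_fixed_right[OF E_fixed_rneg, of b x] by (simp add: E_rneg)

lemma E_rimp_fixed_left:
  assumes "E a = a" shows "E (a \<leadsto> y) = a \<leadsto> E y"
proof -
  have "E (a \<leadsto> y) = E (rneg y \<rightarrow> rneg a)"
    by (rule arg_cong[OF rimp_contrapos])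
  also have "\<dots> = rneg (E y) \<rightarrow> rneg a"
    using E_imp_fixed_right[OF E_fixed_rneg[OF assms]] by (simp add: A_rneg)
  finally show ?thesis
    by (simp only: rimp_contrapos[of a "E y"])
qed

lemma E_rimp_fixed_right:
  assumes "E b = b" shows "E (x \<leadsto> b) = A x \<leadsto> b"
proof -
  have "E (x \<leadsto> b) = E (rneg b \<rightarrow> rneg x)"
    by (rule arg_cong[OF rimp_contrapos])
  also have "\<dots> = rneg b \<rightarrow> rneg (A x)"
    using E_imp_fixed_left[OF E_fixed_rneg[OF assms]] by (simp add: E_rneg)
  finally show ?thesis
    by (simp only: rimp_contrapos[of "A x" b])
qed

lemma A_rimp_fixed_left:
  assumes "E a = a" shows "A (a \<leadsto> y) = a \<leadsto> A y"
proof -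
  have "A (a \<leadsto> y) = A (rneg y \<rightarrow> rneg a)"
    by (rule arg_cong[OF rimp_contrapos])
  also have "\<dots> = rneg (A y) \<rightarrow> rneg a"
    using A_imp_fixed_right[OF E_fixed_rneg[OF assms]] by (simp add: E_rneg)
  finally show ?thesis
    by (simp only: rimp_contrapos[of a "A y"])
qed

lemma A_rimp_fixed_right:
  assumes "E b = b" shows "A (x \<leadsto> b) = E x \<leadsto> b"
proof -
  have "A (x \<leadsto> b) = A (rneg b \<rightarrow> rneg x)"
    by (rule arg_cong[OF rimp_contrapos])
  also have "\<dots> = rneg b \<rightarrow> rneg (E x)"
    using A_imp_fixed_left[OF E_fixed_rneg[OF assms]] by (simp add: A_rneg)
  finally show ?thesis
    by (simp only: rimp_contrapos[of "E x" b])
qed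

end

theorem proposition5p11:
  fixes imp rimp :: "'a::order \<Rightarrow> 'a \<Rightarrow> 'a" and d u :: 'a and E A :: "'a \<Rightarrow> 'a"
  assumes "quantum_B_algebra imp rimp"
    and "unit_of imp rimp u"
    and "weakly_involutive imp rimp d"
    and "strong_synchronized imp rimp d E A"
    and "weak_exists_quantifier imp rimp d u E"
  shows "\<forall>x y.
     E (imp (A x) y) = imp (A x) (E y) \<and> E (rimp (A x) y) = rimp (A x) (E y) \<and>
     E (imp x (A y)) = imp (A x) (A y) \<and> E (rimp x (A y)) = rimp (A x) (A y) \<and>
     E (imp (E x) y) = imp (E x) (E y) \<and> E (rimp (E x) y) = rimp (E x) (E y) \<and>
     A (imp (E x) y) = imp (E x) (A y) \<and> A (rimp (E x) y) = rimp (E x) (A y) \<and>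
     A (imp x (E y)) = imp (E x) (E y) \<and> A (rimp x (E y)) = rimp (E x) (E y) \<and>
     A (imp (A x) y) = imp (A x) (A y) \<and> A (rimp (A x) y) = rimp (A x) (A y) \<and>
     A (imp x (A y)) = imp (E x) (A y) \<and> A (rimp x (A y)) = rimp (E x) (A y)"
proof -
  interpret synchronized_quantifiers imp rimp d E A
    using assms(1,3,4,5) by unfold_locales (auto simp: weak_exists_quantifier_def)
  show ?thesis
    by (simp add: E_imp_fixed_left E_imp_fixed_right E_rimp_fixed_left E_rimp_fixed_right
        A_imp_fixed_left A_imp_fixed_right A_rimp_fixed_left A_rimp_fixed_right)
qed

end
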